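(* Let $L$ be a commutative C-loop with neutral element $e$, and let $K=\{x\in L: x^2=e\}$. Then $K$ is a normal subloop of $L$ and the factor loop $L/K$ is a group.
   Context: A C-loop is a loop satisfying $x(y(yz))=((xy)y)z$ for all $x,y,z$. A subloop $K$ of $L$ is normal if $xK=Kx$, $x(yK)=(xy)K$ and $x(Ky)=(xK)y$ for all $x,y\in L$; $L/K$ is the factor loop of cosets. *)

theory Defs
  imports "HOL-Algebra.Coset"
begin

definition loop :: "('a, 'b) monoid_scheme \<Rightarrow> bool" where
  "loop G \<longleftrightarrow>
     \<one>\<^bsub>G\<^esub> \<in> carrier G \<and>
     (\<forall>x\<in>carrier G. \<forall>y\<in>carrier G. x \<otimes>\<^bsub>G\<^esub> y \<in> carrier G) \<and>
     (\<forall>x\<in>carrier G. \<one>\<^bsub>G\<^esub> \<otimes>\<^bsub>G\<^esub> x = x \<and> x \<otimes>\<^bsub>G\<^esub> \<one>\<^bsub>G\<^esub> = x) \<and>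
     (\<forall>a\<in>carrier G. \<forall>b\<in>carrier G. \<exists>!x. x \<in> carrier G \<and> a \<otimes>\<^bsub>G\<^esub> x = b) \<and>
     (\<forall>a\<in>carrier G. \<forall>b\<in>carrier G. \<exists>!y. y \<in> carrier G \<and> y \<otimes>\<^bsub>G\<^esub> a = b)"

definition commutative_loop :: "('a, 'b) monoid_scheme \<Rightarrow> bool" where
  "commutative_loop G \<longleftrightarrow> loop G \<and>
     (\<forall>x\<in>carrier G. \<forall>y\<in>carrier G. x \<otimes>\<^bsub>G\<^esub> y = y \<otimes>\<^bsub>G\<^esub> x)"

definition C_loop :: "('a, 'b) monoid_scheme \<Rightarrow> bool" where
  "C_loop G \<longleftrightarrow> loop G \<and>
     (\<forall>x\<in>carrier G. \<forall>y\<in>carrier G. \<forall>z\<in>carrier G.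
        x \<otimes>\<^bsub>G\<^esub> (y \<otimes>\<^bsub>G\<^esub> (y \<otimes>\<^bsub>G\<^esub> z)) =
        ((x \<otimes>\<^bsub>G\<^esub> y) \<otimes>\<^bsub>G\<^esub> y) \<otimes>\<^bsub>G\<^esub> z)"

definition subloop :: "'a set \<Rightarrow> ('a, 'b) monoid_scheme \<Rightarrow> bool" where
  "subloop K G \<longleftrightarrow> K \<subseteq> carrier G \<and> loop (G\<lparr>carrier := K\<rparr>)"

definition normal_subloop :: "'a set \<Rightarrow> ('a, 'b) monoid_scheme \<Rightarrow> bool" where
  "normal_subloop K G \<longleftrightarrow> subloop K G \<and>
     (\<forall>x\<in>carrier G. x <#\<^bsub>G\<^esub> K = K #>\<^bsub>G\<^esub> x) \<and>
     (\<forall>x\<in>carrier G. \<forall>y\<in>carrier G.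
        x <#\<^bsub>G\<^esub> (y <#\<^bsub>G\<^esub> K) = (x \<otimes>\<^bsub>G\<^esub> y) <#\<^bsub>G\<^esub> K) \<and>
     (\<forall>x\<in>carrier G. \<forall>y\<in>carrier G.
        x <#\<^bsub>G\<^esub> (K #>\<^bsub>G\<^esub> y) = (x <#\<^bsub>G\<^esub> K) #>\<^bsub>G\<^esub> y)"

text \<open>Factor loop L/K: cosets xK with (xK)(yK) = (xy)K, neutral element K
  (well defined when K is normal).\<close>
definition factor_loop :: "('a, 'b) monoid_scheme \<Rightarrow> 'a set \<Rightarrow> 'a set monoid" where
  "factor_loop G K = \<lparr>carrier = (\<lambda>x. x <#\<^bsub>G\<^esub> K) ` carrier G,
     mult = (\<lambda>A B. SOME C. \<exists>x\<in>carrier G. \<exists>y\<in>carrier G.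
               A = x <#\<^bsub>G\<^esub> K \<and> B = y <#\<^bsub>G\<^esub> K \<and> C = (x \<otimes>\<^bsub>G\<^esub> y) <#\<^bsub>G\<^esub> K),
     one = K\<rparr>"

end

theory Submission
  imports Defs
begin

text \<open>In a commutative C-loop squaring is a homomorphism, \<open>(xy)\<^sup>2 = x\<^sup>2y\<^sup>2\<close>, with kernel
  \<open>K\<close>; hence the coset \<open>xK\<close> is the fibre of squaring over \<open>x\<^sup>2\<close>, which makes \<open>K\<close> normal and
  identifies \<open>L/K\<close> with the loop of squares. That loop is associative because squares are
  middle nuclear: \<open>a(y\<^sup>2b) = (ay\<^sup>2)b\<close> follows from the C-law and the alternative laws.\<close>

lemma factor_loop_mult_l_coset:
  fixes G (structure)
  assumes compatible: "\<And>x x' y y'. \<lbrakk>x \<in> carrier G; x' \<in> carrier G; y \<in> carrier G; y' \<in> carrier G;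
      x <# K = x' <# K; y <# K = y' <# K\<rbrakk> \<Longrightarrow> (x \<otimes> y) <# K = (x' \<otimes> y') <# K"
    and x: "x \<in> carrier G" and y: "y \<in> carrier G"
  shows "(x <# K) \<otimes>\<^bsub>factor_loop G K\<^esub> (y <# K) = (x \<otimes> y) <# K"
proof -
  have "(x <# K) \<otimes>\<^bsub>factor_loop G K\<^esub> (y <# K) = (SOME C. \<exists>x'\<in>carrier G. \<exists>y'\<in>carrier G.
      x <# K = x' <# K \<and> y <# K = y' <# K \<and> C = (x' \<otimes> y') <# K)"
    by (simp add: factor_loop_def)
  also have "\<dots> = (x \<otimes> y) <# K"
    using x y compatible by (intro some_equality) blast+
  finally show ?thesis .
qed

locale loop_struct =
  fixes L (structure)
  assumes loop: "loop L"
begin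

lemma one_closed [simp]: "\<one> \<in> carrier L"
  using loop by (simp add: loop_def)

lemma m_closed [simp]: "x \<in> carrier L \<Longrightarrow> y \<in> carrier L \<Longrightarrow> x \<otimes> y \<in> carrier L"
  using loop by (simp add: loop_def)

lemma l_one [simp]: "x \<in> carrier L \<Longrightarrow> \<one> \<otimes> x = x"
  using loop by (simp add: loop_def)

lemma r_one [simp]: "x \<in> carrier L \<Longrightarrow> x \<otimes> \<one> = x"
  using loop by (simp add: loop_def)

lemma l_div_ex1: "a \<in> carrier L \<Longrightarrow> b \<in> carrier L \<Longrightarrow> \<exists>!x. x \<in> carrier L \<and> a \<otimes> x = b"
  using loop by (simp add: loop_def)

lemma l_div_ex: "a \<in> carrier L \<Longrightarrow> b \<in> carrier L \<Longrightarrow> \<exists>x\<in>carrier L. a \<otimes> x = b"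
  using l_div_ex1 by blast

lemma l_cancel:
  assumes "a \<in> carrier L" "x \<in> carrier L" "y \<in> carrier L" "a \<otimes> x = a \<otimes> y"
  shows "x = y"
  using l_div_ex1[of a "a \<otimes> x"] assms by auto

end

locale C_loop_struct =
  fixes L (structure)
  assumes C_loop: "C_loop L"

sublocale C_loop_struct \<subseteq> loop_struct
  using C_loop unfolding C_loop_def by unfold_locales blast

context C_loop_struct
begin

lemma C_identity:
  "x \<in> carrier L \<Longrightarrow> y \<in> carrier L \<Longrightarrow> z \<in> carrier L \<Longrightarrow>
   x \<otimes> (y \<otimes> (y \<otimes> z)) = ((x \<otimes> y) \<otimes> y) \<otimes> z"
  using C_loop unfolding C_loop_def by blast

lemma left_alternative: "y \<in> carrier L \<Longrightarrow> z \<in> carrier L \<Longrightarrow> y \<otimes> (y \<otimes> z) = (y \<otimes> y) \<otimes> z"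
  using C_identity[of \<one> y z] by simp

lemma right_alternative: "x \<in> carrier L \<Longrightarrow> y \<in> carrier L \<Longrightarrow> x \<otimes> (y \<otimes> y) = (x \<otimes> y) \<otimes> y"
  using C_identity[of x y \<one>] by simp

lemma square_middle_nuclear:
  "a \<in> carrier L \<Longrightarrow> y \<in> carrier L \<Longrightarrow> b \<in> carrier L \<Longrightarrow>
   a \<otimes> ((y \<otimes> y) \<otimes> b) = (a \<otimes> (y \<otimes> y)) \<otimes> b"
  using C_identity[of a y b] left_alternative[of y b] right_alternative[of a y] by simp

lemma left_inverse_property:
  assumes z: "z \<in> carrier L" and x: "x \<in> carrier L" and w: "w \<in> carrier L" and "z \<otimes> x = \<one>"
  shows "z \<otimes> (x \<otimes> w) = w"
proof -
  obtain c where c: "c \<in> carrier L" "x \<otimes> c = w" using l_div_ex x w by blast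
  have "z \<otimes> (x \<otimes> w) = ((z \<otimes> x) \<otimes> x) \<otimes> c" using C_identity[OF z x c(1)] c(2) by simp
  then show ?thesis using \<open>z \<otimes> x = \<one>\<close> x c by simp
qed

end

locale comm_C_loop_struct = C_loop_struct +
  assumes commutative_loop: "commutative_loop L"
begin

lemma m_comm: "x \<in> carrier L \<Longrightarrow> y \<in> carrier L \<Longrightarrow> x \<otimes> y = y \<otimes> x"
  using commutative_loop by (simp add: commutative_loop_def)

lemma inverse_ex:
  assumes "x \<in> carrier L"
  obtains x' where "x' \<in> carrier L" "x \<otimes> x' = \<one>" "x' \<otimes> x = \<one>"
proof -
  obtain x' where x': "x' \<in> carrier L" "x \<otimes> x' = \<one>" using l_div_ex[OF assms one_closed] by blast
  then have "x' \<otimes> x = \<one>" using m_comm[OF x'(1) assms] by simp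
  with x' that show thesis by blast
qed

lemma square_mult:
  assumes x: "x \<in> carrier L" and y: "y \<in> carrier L"
  shows "(x \<otimes> y) \<otimes> (x \<otimes> y) = (x \<otimes> x) \<otimes> (y \<otimes> y)"
proof -
  obtain x' where x': "x' \<in> carrier L" "x \<otimes> x' = \<one>" "x' \<otimes> x = \<one>"
    using inverse_ex x by blast
  define u where "u = x \<otimes> y"
  have u: "u \<in> carrier L" using x y by (simp add: u_def)
  have "u \<otimes> x' = y"
    using left_inverse_property[OF x'(1) x y x'(3)] m_comm x'(1) u by (simp add: u_def)
  then have "x' \<otimes> (u \<otimes> u) = x \<otimes> (y \<otimes> y)"
    using m_comm[OF x' (1)] left_alternative[OF u x'(1)] right_alternative[OF x y] u
    by (simp add: u_def)
  moreover have "u \<otimes> u = x \<otimes> (x' \<otimes> (u \<otimes> u))"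
    using left_inverse_property[OF x x'(1) _ x'(2)] u by simp
  ultimately show ?thesis using left_alternative x y by (simp add: u_def)
qed

definition square_fibre :: "'a \<Rightarrow> 'a set" where
  "square_fibre s = {z \<in> carrier L. z \<otimes> z = s}"

abbreviation square_kernel :: "'a set" where
  "square_kernel \<equiv> square_fibre \<one>"

lemma square_fibre_subset: "square_fibre s \<subseteq> carrier L"
  unfolding square_fibre_def by blast

lemma l_coset_square_fibre:
  assumes x: "x \<in> carrier L" and y: "y \<in> carrier L"
  shows "x <# square_fibre (y \<otimes> y) = square_fibre ((x \<otimes> y) \<otimes> (x \<otimes> y))"
proof
  show "x <# square_fibre (y \<otimes> y) \<subseteq> square_fibre ((x \<otimes> y) \<otimes> (x \<otimes> y))"
  proof
    fix z assume "z \<in> x <# square_fibre (y \<otimes> y)"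
    then obtain h where h: "h \<in> carrier L" "h \<otimes> h = y \<otimes> y" and z: "z = x \<otimes> h"
      unfolding l_coset_def square_fibre_def by blast
    have "z \<otimes> z = (x \<otimes> x) \<otimes> (y \<otimes> y)" using square_mult[OF x h(1)] h(2) z by simp
    then show "z \<in> square_fibre ((x \<otimes> y) \<otimes> (x \<otimes> y))"
      unfolding square_fibre_def using square_mult[OF x y] x h(1) z by simp
  qed
  show "square_fibre ((x \<otimes> y) \<otimes> (x \<otimes> y)) \<subseteq> x <# square_fibre (y \<otimes> y)"
  proof
    fix z assume "z \<in> square_fibre ((x \<otimes> y) \<otimes> (x \<otimes> y))"
    then have z: "z \<in> carrier L" and zz: "z \<otimes> z = (x \<otimes> x) \<otimes> (y \<otimes> y)"
      unfolding square_fibre_def using square_mult x y by auto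
    obtain w where w: "w \<in> carrier L" "x \<otimes> w = z" using l_div_ex x z by blast
    have "(x \<otimes> x) \<otimes> (w \<otimes> w) = (x \<otimes> x) \<otimes> (y \<otimes> y)" using square_mult[OF x w(1)] w(2) zz by simp
    then have "w \<otimes> w = y \<otimes> y" using x y w(1) by (meson l_cancel m_closed)
    then show "z \<in> x <# square_fibre (y \<otimes> y)"
      unfolding l_coset_def square_fibre_def using w by auto
  qed
qed

lemma l_coset_square_kernel: "x \<in> carrier L \<Longrightarrow> x <# square_kernel = square_fibre (x \<otimes> x)"
  using l_coset_square_fibre[of x \<one>] by simp

lemma r_coset_eq_l_coset: "A \<subseteq> carrier L \<Longrightarrow> x \<in> carrier L \<Longrightarrow> A #> x = x <# A"
  unfolding l_coset_def r_coset_def using m_comm by blast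

lemma r_coset_square_kernel: "x \<in> carrier L \<Longrightarrow> square_kernel #> x = square_fibre (x \<otimes> x)"
  using r_coset_eq_l_coset[OF square_fibre_subset] l_coset_square_kernel by simp

lemma l_coset_square_kernel_eq_iff:
  "x \<in> carrier L \<Longrightarrow> y \<in> carrier L \<Longrightarrow>
   x <# square_kernel = y <# square_kernel \<longleftrightarrow> x \<otimes> x = y \<otimes> y"
  using l_coset_square_kernel[of x] l_coset_square_kernel[of y] unfolding square_fibre_def by auto

lemma square_kernel_l_div:
  assumes "a \<in> square_kernel" "b \<in> square_kernel" "x \<in> carrier L" "a \<otimes> x = b"
  shows "x \<in> square_kernel"
  using assms square_mult[of a x] unfolding square_fibre_def by auto

lemma subloop_square_kernel: "subloop square_kernel L"
  unfolding subloop_def loop_def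
proof (simp add: square_fibre_subset, intro conjI ballI)
  show "\<one> \<in> square_kernel" unfolding square_fibre_def by simp
next
  fix x y assume "x \<in> square_kernel" "y \<in> square_kernel"
  then show "x \<otimes> y \<in> square_kernel" unfolding square_fibre_def using square_mult by auto
next
  fix x assume "x \<in> square_kernel"
  then show "\<one> \<otimes> x = x" "x \<otimes> \<one> = x" unfolding square_fibre_def by auto
next
  fix a b assume ab: "a \<in> square_kernel" "b \<in> square_kernel"
  then have a: "a \<in> carrier L" and b: "b \<in> carrier L" using square_fibre_subset by auto
  have unique: "x = y" if "x \<in> square_kernel" "y \<in> square_kernel" "a \<otimes> x = a \<otimes> y" for x y
    using l_cancel a that square_fibre_subset by blast
  obtain x where x: "x \<in> carrier L" "a \<otimes> x = b" using l_div_ex a b by blast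
  then have "x \<in> square_kernel" using square_kernel_l_div ab by blast
  then show "\<exists>!x. x \<in> square_kernel \<and> a \<otimes> x = b"
    using x unique by blast
  have "y \<otimes> a = a \<otimes> y" if "y \<in> square_kernel" for y
    using that m_comm a square_fibre_subset by blast
  with \<open>x \<in> square_kernel\<close> show "\<exists>!y. y \<in> square_kernel \<and> y \<otimes> a = b"
    using x unique by (metis (no_types, lifting))
qed

lemma normal_subloop_square_kernel: "normal_subloop square_kernel L"
  unfolding normal_subloop_def
proof (intro conjI ballI)
  fix x y assume x: "x \<in> carrier L" and y: "y \<in> carrier L"
  show "x <# (y <# square_kernel) = (x \<otimes> y) <# square_kernel"
    using l_coset_square_kernel l_coset_square_fibre x y by simp
  have "(x <# square_kernel) #> y = y <# square_fibre (x \<otimes> x)"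
    using r_coset_eq_l_coset[OF square_fibre_subset y] l_coset_square_kernel[OF x] by simp
  also have "\<dots> = square_fibre ((x \<otimes> y) \<otimes> (x \<otimes> y))"
    using l_coset_square_fibre[OF y x] m_comm[OF x y] by simp
  also have "\<dots> = x <# (square_kernel #> y)"
    using l_coset_square_fibre[OF x y] r_coset_square_kernel[OF y] by simp
  finally show "x <# (square_kernel #> y) = (x <# square_kernel) #> y" ..
qed (simp_all add: subloop_square_kernel l_coset_square_kernel r_coset_square_kernel)

lemma factor_loop_square_kernel_mult:
  "x \<in> carrier L \<Longrightarrow> y \<in> carrier L \<Longrightarrow>
   (x <# square_kernel) \<otimes>\<^bsub>factor_loop L square_kernel\<^esub> (y <# square_kernel)
     = (x \<otimes> y) <# square_kernel"
  by (rule factor_loop_mult_l_coset) (simp_all add: l_coset_square_kernel_eq_iff square_mult)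

lemma group_factor_loop_square_kernel: "group (factor_loop L square_kernel)"
proof -
  let ?Q = "factor_loop L square_kernel"
  have carrier: "carrier ?Q = (\<lambda>x. x <# square_kernel) ` carrier L"
    and one: "\<one>\<^bsub>?Q\<^esub> = \<one> <# square_kernel"
    unfolding factor_loop_def by (simp_all add: l_coset_square_kernel)
  note mult = factor_loop_square_kernel_mult
  show ?thesis
  proof (rule groupI)
    fix A B C assume "A \<in> carrier ?Q" "B \<in> carrier ?Q" "C \<in> carrier ?Q"
    then obtain x y z where xyz: "x \<in> carrier L" "y \<in> carrier L" "z \<in> carrier L"
      and "A = x <# square_kernel" "B = y <# square_kernel" "C = z <# square_kernel"
      using carrier by auto
    moreover have "((x \<otimes> y) \<otimes> z) <# square_kernel = (x \<otimes> (y \<otimes> z)) <# square_kernel"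
      using xyz square_middle_nuclear[of "x \<otimes> x" y "z \<otimes> z"]
        square_mult[of "x \<otimes> y" z] square_mult[of x "y \<otimes> z"] square_mult[of x y] square_mult[of y z]
      by (simp add: l_coset_square_kernel_eq_iff)
    ultimately show "A \<otimes>\<^bsub>?Q\<^esub> B \<otimes>\<^bsub>?Q\<^esub> C = A \<otimes>\<^bsub>?Q\<^esub> (B \<otimes>\<^bsub>?Q\<^esub> C)"
      by (simp add: mult)
  next
    fix A assume "A \<in> carrier ?Q"
    then obtain x where x: "x \<in> carrier L" "A = x <# square_kernel" using carrier by auto
    obtain x' where x': "x' \<in> carrier L" "x \<otimes> x' = \<one>" "x' \<otimes> x = \<one>"
      using inverse_ex[OF x(1)] .
    then have "(x' <# square_kernel) \<otimes>\<^bsub>?Q\<^esub> A = \<one>\<^bsub>?Q\<^esub>"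
      using mult[OF x'(1) x(1)] x(2) x'(3) one by simp
    moreover have "x' <# square_kernel \<in> carrier ?Q" using carrier x'(1) by simp
    ultimately show "\<exists>B\<in>carrier ?Q. B \<otimes>\<^bsub>?Q\<^esub> A = \<one>\<^bsub>?Q\<^esub>" by blast
  qed (use carrier one mult in auto)
qed

end

theorem proposition5p2:
  fixes L :: "('a, 'b) monoid_scheme"
  assumes "commutative_loop L" and "C_loop L"
  defines "K \<equiv> {x \<in> carrier L. x \<otimes>\<^bsub>L\<^esub> x = \<one>\<^bsub>L\<^esub>}"
  shows "normal_subloop K L \<and> group (factor_loop L K)"
proof -
  interpret comm_C_loop_struct L
    using assms by unfold_locales
  have "K = square_kernel" unfolding K_def square_fibre_def ..
  then show ?thesis using normal_subloop_square_kernel group_factor_loop_square_kernel by simp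
qed

end
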